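(* Let $G=(V,E)$ be a finite graph with couplings $J_e>0$, $p_e=1-e^{-2J_e}$. Let $\Omega=\{0,1\}^E$, $\Sigma=\{-1,+1\}^V$, $f:\Omega\to2^\Sigma$, $f(\omega)=\{\sigma\in\Sigma\mid\omega_e=0\ \forall e\notin S(\sigma)\}$. For $A\subset V$ with $|A|$ even let $\rho[\omega]\propto\mathbf{1}[\omega\in\mathcal{F}_A]\mathbb{P}_p[\omega]$ and $\gamma[\sigma]\propto1$. Let $\mathscr{P}$ be the probability measure on $\Omega\times\Sigma$ with $\mathscr{P}[\omega,\sigma]\propto\rho[\omega]\gamma[\sigma]\mathbf{1}[\sigma\in f(\omega)]$. Then: (a) The marginal of $\mathscr{P}$ on $\Sigma$ is $\mu^A$ given by $\mu^A[\sigma]\propto\mu[\sigma]\,\mathbb{P}_{S(\sigma),p}[\mathcal{F}_A]$. For each $\omega\in\mathcal{F}_A$, $\mathscr{P}[\cdot\mid\omega]$ is obtained by assigning independent uniform signs to the open clusters of $\omega$. (b) The marginal of $\mathscr{P}$ on $\Omega$ is $\phi_p[\cdot\mid\mathcal{F}_A]$. For each $\sigma$ with $S(\sigma)\in\mathcal{F}_A$, $\mathscr{P}[\cdot\mid\sigma]=\mathbb{P}_{S(\sigma),p}[\cdot\mid\mathcal{F}_A]$.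
   Context: Configurations are identified with sets of open edges; open clusters are the components of $(V,\omega)$, $\kappa(\omega)$ their number (isolated vertices included). $S(\sigma)=\{uv\in E\mid\sigma_u=\sigma_v\}$. $\partial F$ is the set of odd-degree vertices of $(V,F)$; $\mathcal{F}_A=\{\omega\subset E\mid\exists F\subset\omega,\ \partial F=A\}$. $\mathbb{P}_p$ is Bernoulli percolation on $E$ with parameters $(p_e)$; $\mathbb{P}_{H,p}$ is Bernoulli percolation with parameters $p$ on the edges of $H$ and all other edges closed. $\mu[\sigma]\propto\exp(\sum_{uv\in E}J_{uv}\sigma_u\sigma_v)$ is the Ising measure. $\phi_p[\omega]\propto2^{\kappa(\omega)}\prod_{e\in\omega}p_e\prod_{e\notin\omega}(1-p_e)$ is the random-cluster measure with $q=2$. *)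

theory Defs
  imports Complex_Main "HOL-Library.FuncSet"
begin

text \<open>Graph G = (V,E): V a finite vertex set, edges are two-element subsets of V.
  Configurations omega are subsets of E (the open edges); spin configurations are
  extensional functions V -> {-1,+1}.\<close>

definition simple_graph :: "'v set \<Rightarrow> 'v set set \<Rightarrow> bool" where
  "simple_graph V E \<longleftrightarrow> finite V \<and> E \<subseteq> {{u, v} | u v. u \<in> V \<and> v \<in> V \<and> u \<noteq> v}"

definition normalize :: "('a \<Rightarrow> real) \<Rightarrow> 'a set \<Rightarrow> 'a \<Rightarrow> real" where
  "normalize W X x = (if x \<in> X then W x / (\<Sum>y\<in>X. W y) else 0)"

definition spins :: "'v set \<Rightarrow> ('v \<Rightarrow> int) set" where
  "spins V = (V \<rightarrow>\<^sub>E {-1, 1})"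

definition S :: "'v set set \<Rightarrow> ('v \<Rightarrow> int) \<Rightarrow> 'v set set" where
  "S E \<sigma> = {e \<in> E. \<forall>u\<in>e. \<forall>v\<in>e. \<sigma> u = \<sigma> v}"

definition boundary :: "'v set \<Rightarrow> 'v set set \<Rightarrow> 'v set" where
  "boundary V F = {v \<in> V. odd (card {e \<in> F. v \<in> e})}"

definition FA :: "'v set \<Rightarrow> 'v set set \<Rightarrow> 'v set \<Rightarrow> 'v set set set" where
  "FA V E A = {\<omega>. \<omega> \<subseteq> E \<and> (\<exists>F. F \<subseteq> \<omega> \<and> boundary V F = A)}"

text \<open>Bernoulli percolation with parameters p on the edges of H, all other edges closed:
  the probability of the configuration omega. With H = E this is P_p.\<close>
definition perc :: "('v set \<Rightarrow> real) \<Rightarrow> 'v set set \<Rightarrow> 'v set set \<Rightarrow> real" where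
  "perc p H \<omega> = (if \<omega> \<subseteq> H then (\<Prod>e\<in>\<omega>. p e) * (\<Prod>e\<in>H - \<omega>. 1 - p e) else 0)"

definition perc_event :: "('v set \<Rightarrow> real) \<Rightarrow> 'v set set \<Rightarrow> 'v set set set \<Rightarrow> real" where
  "perc_event p H X = (\<Sum>\<omega>\<in>X. perc p H \<omega>)"

definition conn :: "'v set \<Rightarrow> 'v set set \<Rightarrow> ('v \<times> 'v) set" where
  "conn V \<omega> = Id_on V \<union> {(u, v). {u, v} \<in> \<omega>}\<^sup>+"

definition clusters :: "'v set \<Rightarrow> 'v set set \<Rightarrow> 'v set set" where
  "clusters V \<omega> = V // conn V \<omega>"

definition kappa :: "'v set \<Rightarrow> 'v set set \<Rightarrow> nat" where
  "kappa V \<omega> = card (clusters V \<omega>)"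

definition ising :: "'v set \<Rightarrow> 'v set set \<Rightarrow> ('v set \<Rightarrow> real) \<Rightarrow> ('v \<Rightarrow> int) \<Rightarrow> real" where
  "ising V E J = normalize (\<lambda>\<sigma>. exp (\<Sum>e\<in>E. J e * real_of_int (\<Prod>v\<in>e. \<sigma> v))) (spins V)"

definition random_cluster :: "'v set \<Rightarrow> 'v set set \<Rightarrow> ('v set \<Rightarrow> real) \<Rightarrow> 'v set set \<Rightarrow> real" where
  "random_cluster V E p = normalize (\<lambda>\<omega>. 2 ^ kappa V \<omega> * perc p E \<omega>) (Pow E)"

definition f :: "'v set \<Rightarrow> 'v set set \<Rightarrow> 'v set set \<Rightarrow> ('v \<Rightarrow> int) set" where
  "f V E \<omega> = {\<sigma> \<in> spins V. \<forall>e \<in> E - S E \<sigma>. e \<notin> \<omega>}"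

definition rho :: "'v set \<Rightarrow> 'v set set \<Rightarrow> ('v set \<Rightarrow> real) \<Rightarrow> 'v set \<Rightarrow> 'v set set \<Rightarrow> real" where
  "rho V E p A = normalize (\<lambda>\<omega>. (if \<omega> \<in> FA V E A then 1 else 0) * perc p E \<omega>) (Pow E)"

definition gamma :: "'v set \<Rightarrow> ('v \<Rightarrow> int) \<Rightarrow> real" where
  "gamma V = normalize (\<lambda>\<sigma>. 1) (spins V)"

definition joint :: "'v set \<Rightarrow> 'v set set \<Rightarrow> ('v set \<Rightarrow> real) \<Rightarrow> 'v set
    \<Rightarrow> 'v set set \<times> ('v \<Rightarrow> int) \<Rightarrow> real" where
  "joint V E p A = normalize
     (\<lambda>(\<omega>, \<sigma>). rho V E p A \<omega> * gamma V \<sigma> * (if \<sigma> \<in> f V E \<omega> then 1 else 0))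
     (Pow E \<times> spins V)"

definition muA :: "'v set \<Rightarrow> 'v set set \<Rightarrow> ('v set \<Rightarrow> real) \<Rightarrow> ('v set \<Rightarrow> real) \<Rightarrow> 'v set
    \<Rightarrow> ('v \<Rightarrow> int) \<Rightarrow> real" where
  "muA V E J p A = normalize (\<lambda>\<sigma>. ising V E J \<sigma> * perc_event p (S E \<sigma>) (FA V E A)) (spins V)"

text \<open>Law of the spin configuration obtained by giving each open cluster of omega an
  independent uniform sign: push-forward of the uniform measure on sign assignments
  to clusters.\<close>
definition cluster_sign_law :: "'v set \<Rightarrow> 'v set set \<Rightarrow> ('v \<Rightarrow> int) \<Rightarrow> real" where
  "cluster_sign_law V \<omega> \<sigma> =
     (\<Sum>\<tau> \<in> clusters V \<omega> \<rightarrow>\<^sub>E {-1, 1}. (1 / 2) ^ card (clusters V \<omega>) *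
        (if \<sigma> = (\<lambda>v\<in>V. \<tau> (conn V \<omega> `` {v})) then 1 else 0))"

end

theory Submission
  imports Defs
begin

text \<open>Up to a constant, the joint weight of \<open>(\<omega>, \<sigma>)\<close> is
  \<open>1[\<omega> \<in> F_A] P_p[\<omega>] 1[\<omega> \<subseteq> S(\<sigma>)]\<close>, so all four claims are marginals or conditionals
  of one normalised product weight. The spin configurations compatible with \<open>\<omega>\<close> are exactly
  those constant on its open clusters, \<open>2^\<kappa>(\<omega>)\<close> of them; summing over \<open>\<sigma>\<close> therefore produces
  the random-cluster weight, and conditioning on \<open>\<omega>\<close> gives independent uniform cluster signs.
  Summing over \<open>\<omega>\<close> instead uses
  \<open>P_p[\<omega>] 1[\<omega> \<subseteq> H] = P_{H,p}[\<omega>] \<Prod>_{e \<notin> H} (1 - p_e)\<close>, and with \<open>p_e = 1 - exp(-2 J_e)\<close>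
  the factor \<open>\<Prod>_{e \<notin> S(\<sigma>)} exp(-2 J_e)\<close> is the Ising weight of \<open>\<sigma>\<close> divided by
  \<open>exp(\<Sum>_e J_e)\<close>.\<close>

lemma normalize_scale:
  assumes "c \<noteq> 0" and "\<And>x. x \<in> X \<Longrightarrow> W1 x = c * W2 x"
  shows "normalize W1 X = normalize W2 X"
proof
  fix x
  have "sum W1 X = c * sum W2 X" using assms(2) by (simp add: sum_distrib_left)
  then show "normalize W1 X x = normalize W2 X x" using assms by (auto simp: normalize_def)
qed

text \<open>No positivity of the total masses is needed: if one of them vanishes,
  \<open>normalize\<close> returns \<open>0\<close> on both sides.\<close>

lemma normalize_mult_normalize:
  assumes "finite X" "finite Y" "\<And>x. x \<in> X \<Longrightarrow> 0 \<le> U x" "\<And>y. y \<in> Y \<Longrightarrow> 0 \<le> U' y"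
  shows "normalize (\<lambda>(x, y). normalize U X x * normalize U' Y y * K x y) (X \<times> Y)
       = normalize (\<lambda>(x, y). U x * U' y * K x y) (X \<times> Y)"
proof (cases "sum U X = 0 \<or> sum U' Y = 0")
  case True
  then have "U x * U' y = 0" if "x \<in> X" "y \<in> Y" for x y
    using that assms by (auto simp: sum_nonneg_eq_0_iff)
  then show ?thesis by (auto simp: normalize_def fun_eq_iff)
next
  case False
  then show ?thesis
    by (intro normalize_scale[where c = "1 / (sum U X * sum U' Y)"]) (auto simp: normalize_def)
qed

lemma normalize_marginal_fst:
  assumes "x \<in> X"
  shows "(\<Sum>y\<in>Y. normalize (case_prod W) (X \<times> Y) (x, y)) = normalize (\<lambda>x. \<Sum>y\<in>Y. W x y) X x"
  using assms by (simp add: normalize_def sum_divide_distrib sum.cartesian_product[symmetric])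

lemma normalize_marginal_snd:
  assumes "y \<in> Y"
  shows "(\<Sum>x\<in>X. normalize (case_prod W) (X \<times> Y) (x, y)) = normalize (\<lambda>y. \<Sum>x\<in>X. W x y) Y y"
  using assms
  by (simp add: normalize_def sum_divide_distrib sum.cartesian_product[symmetric] sum.swap[of _ X])

lemma normalize_conditional_fst:
  assumes "finite X" "finite Y" "\<And>x y. x \<in> X \<Longrightarrow> y \<in> Y \<Longrightarrow> 0 \<le> W x y" "x \<in> X" "y \<in> Y"
  shows "normalize (case_prod W) (X \<times> Y) (x, y) / (\<Sum>y'\<in>Y. normalize (case_prod W) (X \<times> Y) (x, y'))
       = normalize (W x) Y y"
proof (cases "(\<Sum>z\<in>X \<times> Y. case_prod W z) = 0")
  case True
  then have "W x y = 0" using assms by (subst (asm) sum_nonneg_eq_0_iff) auto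
  then show ?thesis using assms by (simp add: normalize_def)
next
  case False
  then show ?thesis using assms by (simp add: normalize_def sum_divide_distrib[symmetric])
qed

lemma normalize_conditional_snd:
  assumes "finite X" "finite Y" "\<And>x y. x \<in> X \<Longrightarrow> y \<in> Y \<Longrightarrow> 0 \<le> W x y" "x \<in> X" "y \<in> Y"
  shows "normalize (case_prod W) (X \<times> Y) (x, y) / (\<Sum>x'\<in>X. normalize (case_prod W) (X \<times> Y) (x', y))
       = normalize (\<lambda>x. W x y) X x"
proof (cases "(\<Sum>z\<in>X \<times> Y. case_prod W z) = 0")
  case True
  then have "W x y = 0" using assms by (subst (asm) sum_nonneg_eq_0_iff) auto
  then show ?thesis using assms by (simp add: normalize_def)
next
  case False
  then show ?thesis using assms by (simp add: normalize_def sum_divide_distrib[symmetric])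
qed

lemma perc_pos:
  assumes "finite H" and "\<And>e. e \<in> H \<Longrightarrow> 0 < p e \<and> p e < 1" and "\<omega> \<subseteq> H"
  shows "0 < perc p H \<omega>"
  using assms finite_subset[OF assms(3)] unfolding perc_def
  by (auto intro!: mult_pos_pos prod_pos)

lemma perc_nonneg:
  assumes "\<And>e. e \<in> H \<Longrightarrow> 0 \<le> p e \<and> p e \<le> 1"
  shows "0 \<le> perc p H \<omega>"
  using assms unfolding perc_def by (auto intro!: mult_nonneg_nonneg prod_nonneg)

lemma perc_restrict:
  assumes "finite E" and "H \<subseteq> E" and "\<omega> \<subseteq> E"
  shows "perc p E \<omega> * (if \<omega> \<subseteq> H then 1 else 0) = perc p H \<omega> * (\<Prod>e\<in>E - H. 1 - p e)"
proof (cases "\<omega> \<subseteq> H")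
  case True
  have "E - \<omega> = (H - \<omega>) \<union> (E - H)" and "(H - \<omega>) \<inter> (E - H) = {}"
    using True assms by auto
  then have "(\<Prod>e\<in>E - \<omega>. 1 - p e) = (\<Prod>e\<in>H - \<omega>. 1 - p e) * (\<Prod>e\<in>E - H. 1 - p e)"
    using assms by (simp add: prod.union_disjoint finite_subset[of _ E])
  then show ?thesis using True assms unfolding perc_def by simp
qed (simp add: perc_def)

lemma simple_graph_finite:
  assumes "simple_graph V E"
  shows "finite V" and "finite E"
proof -
  show "finite V" using assms unfolding simple_graph_def by auto
  moreover have "E \<subseteq> Pow V" using assms unfolding simple_graph_def by auto
  ultimately show "finite E" by (meson finite_Pow_iff finite_subset)
qed

lemma simple_graph_edgeE:
  assumes "simple_graph V E" and "e \<in> E"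
  obtains u v where "e = {u, v}" "u \<in> V" "v \<in> V" "u \<noteq> v"
  using assms unfolding simple_graph_def by blast

lemma finite_spins: "finite V \<Longrightarrow> finite (spins V)"
  by (simp add: spins_def finite_PiE)

lemma spins_nonempty: "spins V \<noteq> {}"
  by (auto simp: spins_def PiE_eq_empty_iff)

lemma S_subset: "S E \<sigma> \<subseteq> E"
  by (auto simp: S_def)

lemma FA_subset_Pow: "FA V E A \<subseteq> Pow E"
  by (auto simp: FA_def)

lemma mem_f_iff:
  assumes "\<omega> \<subseteq> E"
  shows "\<sigma> \<in> f V E \<omega> \<longleftrightarrow> \<sigma> \<in> spins V \<and> \<omega> \<subseteq> S E \<sigma>"
  using assms unfolding f_def S_def by auto

lemma f_subset_spins: "f V E \<omega> \<subseteq> spins V"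
  by (auto simp: f_def)

lemma conn_imp_same_spin:
  assumes "\<omega> \<subseteq> S E \<sigma>" and "(u, w) \<in> conn V \<omega>"
  shows "\<sigma> u = \<sigma> w"
proof -
  have edge: "\<sigma> a = \<sigma> b" if "{a, b} \<in> \<omega>" for a b
    using that assms(1) unfolding S_def by auto
  have "\<sigma> a = \<sigma> b" if "(a, b) \<in> {(a, b). {a, b} \<in> \<omega>}\<^sup>+" for a b
    using that by (induction rule: trancl_induct) (auto dest: edge)
  then show ?thesis using assms(2) unfolding conn_def by auto
qed

lemma equiv_conn:
  assumes "simple_graph V E" and "\<omega> \<subseteq> E"
  shows "equiv V (conn V \<omega>)"
proof -
  let ?r = "{(u, v). {u, v} \<in> \<omega>}"
  have "?r \<subseteq> V \<times> V"
  proof (clarify)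
    fix a b assume "{a, b} \<in> \<omega>"
    then have "{a, b} \<in> E" using assms(2) by blast
    then obtain u v where "{a, b} = {u, v}" "u \<in> V" "v \<in> V"
      by (rule simple_graph_edgeE[OF assms(1)])
    then show "a \<in> V \<and> b \<in> V" by (metis doubleton_eq_iff)
  qed
  then have "?r\<^sup>+ \<subseteq> V \<times> V" by (rule trancl_subset_Sigma)
  moreover have "sym (?r\<^sup>+)" by (intro sym_trancl) (auto simp: sym_def insert_commute)
  ultimately show ?thesis
    unfolding equiv_def refl_on_def conn_def
  proof (intro conjI)
    show "trans (Id_on V \<union> ?r\<^sup>+)"
      unfolding trans_def by (auto intro: trancl_trans)
    show "sym (Id_on V \<union> ?r\<^sup>+)"
      using \<open>sym (?r\<^sup>+)\<close> unfolding sym_def by blast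
  qed auto
qed

definition spins_of_cluster_signs :: "'v set \<Rightarrow> 'v set set \<Rightarrow> ('v set \<Rightarrow> int) \<Rightarrow> 'v \<Rightarrow> int" where
  "spins_of_cluster_signs V \<omega> \<tau> = (\<lambda>v\<in>V. \<tau> (conn V \<omega> `` {v}))"

lemma inj_on_spins_of_cluster_signs:
  "inj_on (spins_of_cluster_signs V \<omega>) (clusters V \<omega> \<rightarrow>\<^sub>E {-1, 1})"
proof (rule inj_onI)
  fix \<tau>1 \<tau>2
  assume \<tau>: "\<tau>1 \<in> clusters V \<omega> \<rightarrow>\<^sub>E {-1, 1}" "\<tau>2 \<in> clusters V \<omega> \<rightarrow>\<^sub>E {-1, 1}"
    and eq: "spins_of_cluster_signs V \<omega> \<tau>1 = spins_of_cluster_signs V \<omega> \<tau>2"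
  show "\<tau>1 = \<tau>2"
  proof (rule PiE_ext[OF \<tau>])
    fix X assume "X \<in> clusters V \<omega>"
    then obtain v where "v \<in> V" "X = conn V \<omega> `` {v}"
      unfolding clusters_def by (rule quotientE)
    then show "\<tau>1 X = \<tau>2 X"
      using fun_cong[OF eq, of v] by (simp add: spins_of_cluster_signs_def)
  qed
qed

lemma spins_of_cluster_signs_in_f:
  assumes sg: "simple_graph V E" and "\<omega> \<subseteq> E" and \<tau>: "\<tau> \<in> clusters V \<omega> \<rightarrow>\<^sub>E {-1, 1}"
  shows "spins_of_cluster_signs V \<omega> \<tau> \<in> f V E \<omega>"
proof -
  let ?\<sigma> = "spins_of_cluster_signs V \<omega> \<tau>"
  have "conn V \<omega> `` {v} \<in> clusters V \<omega>" if "v \<in> V" for v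
    using that unfolding clusters_def by (rule quotientI)
  then have "?\<sigma> \<in> spins V"
    using \<tau> by (auto simp: spins_def spins_of_cluster_signs_def)
  moreover have "\<omega> \<subseteq> S E ?\<sigma>"
  proof
    fix e assume "e \<in> \<omega>"
    then have "e \<in> E" using assms(2) by blast
    then obtain u v where uv: "e = {u, v}" "u \<in> V" "v \<in> V"
      by (rule simple_graph_edgeE[OF sg])
    have "(u, v) \<in> conn V \<omega>" using \<open>e \<in> \<omega>\<close> uv by (auto simp: conn_def)
    then have "conn V \<omega> `` {u} = conn V \<omega> `` {v}"
      using equiv_conn[OF sg assms(2)] by (simp add: equiv_class_eq_iff)
    then show "e \<in> S E ?\<sigma>"
      using \<open>e \<in> E\<close> uv by (auto simp: S_def spins_of_cluster_signs_def)
  qed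
  ultimately show ?thesis using mem_f_iff[OF assms(2)] by blast
qed

lemma f_subset_image_spins_of_cluster_signs:
  assumes sg: "simple_graph V E" and \<omega>: "\<omega> \<subseteq> E"
  shows "f V E \<omega> \<subseteq> spins_of_cluster_signs V \<omega> ` (clusters V \<omega> \<rightarrow>\<^sub>E {-1, 1})"
proof
  fix \<sigma> assume "\<sigma> \<in> f V E \<omega>"
  then have \<sigma>: "\<sigma> \<in> spins V" and compatible: "\<omega> \<subseteq> S E \<sigma>"
    using mem_f_iff[OF \<omega>] by auto
  let ?R = "conn V \<omega>"
  have rep: "(v, SOME w. w \<in> ?R `` {v}) \<in> ?R" if "v \<in> V" for v
    using that equiv_class_self[OF equiv_conn[OF sg \<omega>]] by (metis Image_singleton_iff someI)
  define \<tau> where "\<tau> = (\<lambda>X\<in>clusters V \<omega>. \<sigma> (SOME w. w \<in> X))"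
  have "\<tau> \<in> clusters V \<omega> \<rightarrow>\<^sub>E {-1, 1}"
  proof
    fix X assume "X \<in> clusters V \<omega>"
    then obtain v where v: "v \<in> V" "X = ?R `` {v}"
      unfolding clusters_def by (rule quotientE)
    have "(SOME w. w \<in> ?R `` {v}) \<in> V"
      using rep[OF v(1)] equiv_conn[OF sg \<omega>] by (auto simp: equiv_def refl_on_def)
    then show "\<tau> X \<in> {-1, 1}" using \<sigma> v \<open>X \<in> clusters V \<omega>\<close> by (auto simp: \<tau>_def spins_def)
  qed (simp add: \<tau>_def)
  moreover have "spins_of_cluster_signs V \<omega> \<tau> = \<sigma>"
  proof
    fix v
    show "spins_of_cluster_signs V \<omega> \<tau> v = \<sigma> v"
    proof (cases "v \<in> V")
      case True
      then have "?R `` {v} \<in> clusters V \<omega>" unfolding clusters_def by (rule quotientI)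
      then show ?thesis
        using conn_imp_same_spin[OF compatible rep[OF True]] True
        by (simp add: spins_of_cluster_signs_def \<tau>_def)
    qed (use \<sigma> in \<open>auto simp: spins_of_cluster_signs_def spins_def\<close>)
  qed
  ultimately show "\<sigma> \<in> spins_of_cluster_signs V \<omega> ` (clusters V \<omega> \<rightarrow>\<^sub>E {-1, 1})" by blast
qed

lemma bij_betw_spins_of_cluster_signs:
  assumes "simple_graph V E" and "\<omega> \<subseteq> E"
  shows "bij_betw (spins_of_cluster_signs V \<omega>) (clusters V \<omega> \<rightarrow>\<^sub>E {-1, 1}) (f V E \<omega>)"
  unfolding bij_betw_def
  using inj_on_spins_of_cluster_signs spins_of_cluster_signs_in_f[OF assms]
    f_subset_image_spins_of_cluster_signs[OF assms] by blast

lemma card_f: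
  assumes "simple_graph V E" and "\<omega> \<subseteq> E"
  shows "card (f V E \<omega>) = 2 ^ kappa V \<omega>"
proof -
  have "finite (clusters V \<omega>)"
    using simple_graph_finite(1)[OF assms(1)] equiv_conn[OF assms]
    by (simp add: clusters_def finite_quotient equiv_def)
  then show ?thesis
    using bij_betw_same_card[OF bij_betw_spins_of_cluster_signs[OF assms]]
    by (simp add: card_PiE kappa_def numeral_2_eq_2)
qed

lemma sum_spins_indicator_f:
  assumes "finite V"
  shows "(\<Sum>\<sigma>\<in>spins V. if \<sigma> \<in> f V E \<omega> then 1 else 0) = real (card (f V E \<omega>))"
  using f_subset_spins[of V E \<omega>] finite_spins[OF assms]
  by (simp add: sum.If_cases Int_absorb1 Int_commute)

lemma cluster_sign_law_eq_uniform:
  assumes "simple_graph V E" and "\<omega> \<subseteq> E"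
  shows "cluster_sign_law V \<omega> = normalize (\<lambda>\<sigma>. if \<sigma> \<in> f V E \<omega> then 1 else 0) (spins V)"
proof
  fix \<sigma>
  let ?c = "(1 / 2) ^ kappa V \<omega> :: real"
  have finV: "finite V" by (rule simple_graph_finite(1)[OF assms(1)])
  have "cluster_sign_law V \<omega> \<sigma>
      = (\<Sum>\<tau>\<in>clusters V \<omega> \<rightarrow>\<^sub>E {-1, 1}. (\<lambda>s. ?c * (if \<sigma> = s then 1 else 0)) (spins_of_cluster_signs V \<omega> \<tau>))"
    by (simp add: cluster_sign_law_def spins_of_cluster_signs_def kappa_def)
  also have "\<dots> = (\<Sum>s\<in>f V E \<omega>. ?c * (if \<sigma> = s then 1 else 0))"
    using sum.reindex_bij_betw[OF bij_betw_spins_of_cluster_signs[OF assms]] .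
  also have "\<dots> = (if \<sigma> \<in> f V E \<omega> then ?c else 0)"
    using finite_subset[OF f_subset_spins finite_spins[OF finV]] by (simp flip: sum_distrib_left)
  also have "\<dots> = normalize (\<lambda>\<sigma>. if \<sigma> \<in> f V E \<omega> then 1 else 0) (spins V) \<sigma>"
    using f_subset_spins[of V E \<omega>]
    by (auto simp: normalize_def sum_spins_indicator_f[OF finV] card_f[OF assms] power_one_over)
  finally show "cluster_sign_law V \<omega> \<sigma> = normalize (\<lambda>\<sigma>. if \<sigma> \<in> f V E \<omega> then 1 else 0) (spins V) \<sigma>" .
qed

lemma ising_boltzmann_factor:
  assumes sg: "simple_graph V E" and p: "\<forall>e\<in>E. p e = 1 - exp (- 2 * J e)" and \<sigma>: "\<sigma> \<in> spins V"
  shows "exp (\<Sum>e\<in>E. J e * real_of_int (\<Prod>v\<in>e. \<sigma> v))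
       = exp (\<Sum>e\<in>E. J e) * (\<Prod>e\<in>E - S E \<sigma>. 1 - p e)"
proof -
  have finE: "finite E" by (rule simple_graph_finite(2)[OF sg])
  have edge: "J e * real_of_int (\<Prod>v\<in>e. \<sigma> v) = J e + (if e \<in> S E \<sigma> then 0 else -2 * J e)"
    if "e \<in> E" for e
  proof -
    obtain u v where uv: "e = {u, v}" "u \<in> V" "v \<in> V" "u \<noteq> v"
      by (rule simple_graph_edgeE[OF sg \<open>e \<in> E\<close>])
    have "\<sigma> u \<in> {-1, 1}" "\<sigma> v \<in> {-1, 1}" using \<sigma> uv by (auto simp: spins_def)
    moreover have "e \<in> S E \<sigma> \<longleftrightarrow> \<sigma> u = \<sigma> v" using that uv by (auto simp: S_def)
    ultimately show ?thesis using uv by auto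
  qed
  have "(\<Sum>e\<in>E. J e * real_of_int (\<Prod>v\<in>e. \<sigma> v))
      = (\<Sum>e\<in>E. J e + (if e \<in> S E \<sigma> then 0 else -2 * J e))"
    using edge by (rule sum.cong[OF refl])
  also have "\<dots> = (\<Sum>e\<in>E. J e) + (\<Sum>e\<in>E - S E \<sigma>. -2 * J e)"
    using finE by (simp add: sum.distrib sum.If_cases Diff_eq)
  finally show ?thesis
    using finE p by (simp add: exp_add exp_sum)
qed

definition coupling_weight ::
    "'v set \<Rightarrow> 'v set set \<Rightarrow> ('v set \<Rightarrow> real) \<Rightarrow> 'v set \<Rightarrow> 'v set set \<Rightarrow> ('v \<Rightarrow> int) \<Rightarrow> real" where
  "coupling_weight V E p A \<omega> \<sigma> =
     (if \<omega> \<in> FA V E A then perc p E \<omega> else 0) * (if \<sigma> \<in> f V E \<omega> then 1 else 0)"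

lemma coupling_weight_nonneg:
  "\<forall>e\<in>E. 0 \<le> p e \<and> p e \<le> 1 \<Longrightarrow> 0 \<le> coupling_weight V E p A \<omega> \<sigma>"
  by (simp add: coupling_weight_def perc_nonneg)

lemma joint_eq_normalize_coupling_weight:
  assumes "finite V" and "finite E" and "\<forall>e\<in>E. 0 \<le> p e \<and> p e \<le> 1"
  shows "joint V E p A = normalize (\<lambda>(\<omega>, \<sigma>). coupling_weight V E p A \<omega> \<sigma>) (Pow E \<times> spins V)"
proof -
  have "(\<lambda>(\<omega>, \<sigma>). (if \<omega> \<in> FA V E A then 1 else 0) * perc p E \<omega> * 1 * (if \<sigma> \<in> f V E \<omega> then 1 else 0))
      = (\<lambda>(\<omega>, \<sigma>). coupling_weight V E p A \<omega> \<sigma>)"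
    by (auto simp: coupling_weight_def fun_eq_iff)
  then show ?thesis
    unfolding joint_def rho_def gamma_def
    by (subst normalize_mult_normalize) (use assms in \<open>auto simp: finite_spins perc_nonneg\<close>)
qed

lemma coupling_weight_eq_perc_S:
  assumes "finite E" and "\<omega> \<subseteq> E" and "\<sigma> \<in> spins V"
  shows "coupling_weight V E p A \<omega> \<sigma>
       = (if \<omega> \<in> FA V E A then perc p (S E \<sigma>) \<omega> else 0) * (\<Prod>e\<in>E - S E \<sigma>. 1 - p e)"
  using perc_restrict[OF assms(1) S_subset assms(2), of p \<sigma>] mem_f_iff[OF assms(2), of \<sigma> V] assms(3)
  by (simp add: coupling_weight_def)

lemma sum_Pow_if_FA:
  assumes "finite E"
  shows "(\<Sum>\<omega>\<in>Pow E. if \<omega> \<in> FA V E A then g \<omega> else 0) = sum g (FA V E A)"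
proof -
  have "(\<Sum>\<omega>\<in>Pow E. if \<omega> \<in> FA V E A then g \<omega> else 0) = sum g (Pow E \<inter> FA V E A)"
    using assms by (simp add: sum.inter_restrict)
  then show ?thesis using FA_subset_Pow[of V E A] by (simp add: inf.absorb2)
qed

lemma sum_coupling_weight_edges:
  assumes "finite E" and "\<sigma> \<in> spins V"
  shows "(\<Sum>\<omega>\<in>Pow E. coupling_weight V E p A \<omega> \<sigma>)
       = perc_event p (S E \<sigma>) (FA V E A) * (\<Prod>e\<in>E - S E \<sigma>. 1 - p e)"
proof -
  have "(\<Sum>\<omega>\<in>Pow E. coupling_weight V E p A \<omega> \<sigma>)
      = (\<Sum>\<omega>\<in>Pow E. (if \<omega> \<in> FA V E A then perc p (S E \<sigma>) \<omega> else 0) * (\<Prod>e\<in>E - S E \<sigma>. 1 - p e))"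
    using assms by (intro sum.cong) (auto simp: coupling_weight_eq_perc_S)
  then show ?thesis
    using assms(1) by (simp add: sum_distrib_right[symmetric] sum_Pow_if_FA perc_event_def)
qed

lemma sum_coupling_weight_spins:
  assumes "simple_graph V E" and "\<omega> \<subseteq> E"
  shows "(\<Sum>\<sigma>\<in>spins V. coupling_weight V E p A \<omega> \<sigma>)
       = (if \<omega> \<in> FA V E A then perc p E \<omega> else 0) * 2 ^ kappa V \<omega>"
  using sum_spins_indicator_f[OF simple_graph_finite(1)[OF assms(1)], of E \<omega>] card_f[OF assms]
  by (simp add: coupling_weight_def sum_distrib_left[symmetric])

lemma joint_marginal_spins:
  assumes sg: "simple_graph V E" and p: "\<forall>e\<in>E. 0 < p e \<and> p e < 1"
    and pJ: "\<forall>e\<in>E. p e = 1 - exp (- 2 * J e)" and \<sigma>: "\<sigma> \<in> spins V"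
  shows "(\<Sum>\<omega>\<in>Pow E. joint V E p A (\<omega>, \<sigma>)) = muA V E J p A \<sigma>"
proof -
  have finV: "finite V" and finE: "finite E" using simple_graph_finite[OF sg] by auto
  define Z where "Z = (\<Sum>\<sigma>\<in>spins V. exp (\<Sum>e\<in>E. J e * real_of_int (\<Prod>v\<in>e. \<sigma> v)))"
  have "0 < Z" unfolding Z_def using finite_spins[OF finV] spins_nonempty by (intro sum_pos) auto
  have "muA V E J p A = normalize (\<lambda>\<sigma>. \<Sum>\<omega>\<in>Pow E. coupling_weight V E p A \<omega> \<sigma>) (spins V)"
    unfolding muA_def ising_def
  proof (rule normalize_scale[where c = "exp (\<Sum>e\<in>E. J e) / Z"])
    fix \<sigma> assume "\<sigma> \<in> spins V"
    then show "normalize (\<lambda>\<sigma>. exp (\<Sum>e\<in>E. J e * real_of_int (\<Prod>v\<in>e. \<sigma> v))) (spins V) \<sigma>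
          * perc_event p (S E \<sigma>) (FA V E A)
        = exp (\<Sum>e\<in>E. J e) / Z * (\<Sum>\<omega>\<in>Pow E. coupling_weight V E p A \<omega> \<sigma>)"
      using ising_boltzmann_factor[OF sg pJ \<open>\<sigma> \<in> spins V\<close>] sum_coupling_weight_edges[OF finE]
      unfolding normalize_def Z_def[symmetric] by simp
  qed (use \<open>0 < Z\<close> in simp)
  then show ?thesis
    using p \<sigma> finV finE
    by (simp add: joint_eq_normalize_coupling_weight less_imp_le normalize_marginal_snd)
qed

lemma joint_conditional_edges:
  assumes sg: "simple_graph V E" and p: "\<forall>e\<in>E. 0 < p e \<and> p e < 1"
    and \<omega>: "\<omega> \<in> FA V E A" and \<sigma>: "\<sigma> \<in> spins V"
  shows "joint V E p A (\<omega>, \<sigma>) / (\<Sum>\<sigma>'\<in>spins V. joint V E p A (\<omega>, \<sigma>')) = cluster_sign_law V \<omega> \<sigma>"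
proof -
  have finV: "finite V" and finE: "finite E" using simple_graph_finite[OF sg] by auto
  have p01: "\<forall>e\<in>E. 0 \<le> p e \<and> p e \<le> 1" using p by auto
  have "\<omega> \<subseteq> E" using \<omega> FA_subset_Pow by blast
  have "joint V E p A (\<omega>, \<sigma>) / (\<Sum>\<sigma>'\<in>spins V. joint V E p A (\<omega>, \<sigma>'))
      = normalize (coupling_weight V E p A \<omega>) (spins V) \<sigma>"
    unfolding joint_eq_normalize_coupling_weight[OF finV finE p01]
    using \<open>\<omega> \<subseteq> E\<close> \<sigma> finV finE coupling_weight_nonneg[OF p01]
    by (intro normalize_conditional_fst) (auto simp: finite_spins)
  also have "normalize (coupling_weight V E p A \<omega>) (spins V)
      = normalize (\<lambda>\<sigma>. if \<sigma> \<in> f V E \<omega> then 1 else 0) (spins V)"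
    using \<omega> perc_pos[OF finE _ \<open>\<omega> \<subseteq> E\<close>, of p] p
    by (intro normalize_scale[where c = "perc p E \<omega>"]) (auto simp: coupling_weight_def)
  finally show ?thesis
    using cluster_sign_law_eq_uniform[OF sg \<open>\<omega> \<subseteq> E\<close>] by simp
qed

lemma joint_marginal_edges:
  assumes sg: "simple_graph V E" and p: "\<forall>e\<in>E. 0 < p e \<and> p e < 1" and \<omega>: "\<omega> \<in> Pow E"
  shows "(\<Sum>\<sigma>\<in>spins V. joint V E p A (\<omega>, \<sigma>))
       = normalize (\<lambda>\<omega>'. random_cluster V E p \<omega>' * (if \<omega>' \<in> FA V E A then 1 else 0)) (Pow E) \<omega>"
proof -
  have finV: "finite V" and finE: "finite E" using simple_graph_finite[OF sg] by auto
  define Z where "Z = (\<Sum>\<omega>\<in>Pow E. 2 ^ kappa V \<omega> * perc p E \<omega>)"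
  have "0 < Z" unfolding Z_def using finE perc_pos[OF finE, of p] p by (intro sum_pos) auto
  have "normalize (\<lambda>\<omega>'. random_cluster V E p \<omega>' * (if \<omega>' \<in> FA V E A then 1 else 0)) (Pow E)
      = normalize (\<lambda>\<omega>. \<Sum>\<sigma>\<in>spins V. coupling_weight V E p A \<omega> \<sigma>) (Pow E)"
  proof (rule normalize_scale[where c = "1 / Z"])
    fix \<omega> assume "\<omega> \<in> Pow E"
    then show "random_cluster V E p \<omega> * (if \<omega> \<in> FA V E A then 1 else 0)
        = 1 / Z * (\<Sum>\<sigma>\<in>spins V. coupling_weight V E p A \<omega> \<sigma>)"
      by (simp add: random_cluster_def normalize_def Z_def[symmetric] sum_coupling_weight_spins[OF sg])
  qed (use \<open>0 < Z\<close> in simp)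
  then show ?thesis
    using p \<omega> finV finE
    by (simp add: joint_eq_normalize_coupling_weight less_imp_le normalize_marginal_fst)
qed

lemma joint_conditional_spins:
  assumes sg: "simple_graph V E" and p: "\<forall>e\<in>E. 0 < p e \<and> p e < 1"
    and \<sigma>: "\<sigma> \<in> spins V" and \<omega>: "\<omega> \<in> Pow E"
  shows "joint V E p A (\<omega>, \<sigma>) / (\<Sum>\<omega>'\<in>Pow E. joint V E p A (\<omega>', \<sigma>))
       = perc p (S E \<sigma>) \<omega> * (if \<omega> \<in> FA V E A then 1 else 0) / perc_event p (S E \<sigma>) (FA V E A)"
proof -
  have finV: "finite V" and finE: "finite E" using simple_graph_finite[OF sg] by auto
  have p01: "\<forall>e\<in>E. 0 \<le> p e \<and> p e \<le> 1" using p by auto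
  have "joint V E p A (\<omega>, \<sigma>) / (\<Sum>\<omega>'\<in>Pow E. joint V E p A (\<omega>', \<sigma>))
      = normalize (\<lambda>\<omega>. coupling_weight V E p A \<omega> \<sigma>) (Pow E) \<omega>"
    unfolding joint_eq_normalize_coupling_weight[OF finV finE p01]
    using \<omega> \<sigma> finV finE coupling_weight_nonneg[OF p01]
    by (intro normalize_conditional_snd) (auto simp: finite_spins)
  also have "normalize (\<lambda>\<omega>. coupling_weight V E p A \<omega> \<sigma>) (Pow E)
      = normalize (\<lambda>\<omega>. if \<omega> \<in> FA V E A then perc p (S E \<sigma>) \<omega> else 0) (Pow E)"
    using p finE \<sigma>
    by (intro normalize_scale[where c = "\<Prod>e\<in>E - S E \<sigma>. 1 - p e"])
       (auto simp: coupling_weight_eq_perc_S intro!: prod_pos)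
  finally show ?thesis
    using \<omega> finE by (simp add: normalize_def sum_Pow_if_FA perc_event_def)
qed

theorem propositionB1:
  fixes V :: "'v set" and E :: "'v set set" and J p :: "'v set \<Rightarrow> real" and A :: "'v set"
  assumes "simple_graph V E"
    and "\<forall>e\<in>E. J e > 0"
    and "\<forall>e\<in>E. p e = 1 - exp (- 2 * J e)"
    and "A \<subseteq> V" and "even (card A)"
  shows
    "(\<forall>\<sigma>\<in>spins V. (\<Sum>\<omega>\<in>Pow E. joint V E p A (\<omega>, \<sigma>)) = muA V E J p A \<sigma>)
   \<and> (\<forall>\<omega>\<in>FA V E A. \<forall>\<sigma>\<in>spins V.
        joint V E p A (\<omega>, \<sigma>) / (\<Sum>\<sigma>'\<in>spins V. joint V E p A (\<omega>, \<sigma>'))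
          = cluster_sign_law V \<omega> \<sigma>)
   \<and> (\<forall>\<omega>\<in>Pow E. (\<Sum>\<sigma>\<in>spins V. joint V E p A (\<omega>, \<sigma>))
          = normalize (\<lambda>\<omega>'. random_cluster V E p \<omega>' * (if \<omega>' \<in> FA V E A then 1 else 0))
              (Pow E) \<omega>)
   \<and> (\<forall>\<sigma>\<in>spins V. S E \<sigma> \<in> FA V E A \<longrightarrow> (\<forall>\<omega>\<in>Pow E.
        joint V E p A (\<omega>, \<sigma>) / (\<Sum>\<omega>'\<in>Pow E. joint V E p A (\<omega>', \<sigma>))
          = perc p (S E \<sigma>) \<omega> * (if \<omega> \<in> FA V E A then 1 else 0)
              / perc_event p (S E \<sigma>) (FA V E A)))"
proof -
  have p: "\<forall>e\<in>E. 0 < p e \<and> p e < 1"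
    using assms(2,3) by simp
  show ?thesis
    using joint_marginal_spins[OF assms(1) p assms(3)] joint_conditional_edges[OF assms(1) p]
      joint_marginal_edges[OF assms(1) p] joint_conditional_spins[OF assms(1) p]
    by blast
qed

end
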